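(* Let $A \subseteq \mathbb{C}$ be a countable set, and for each $\alpha \in A$ and each integer $s \geq 0$ let $E_{\alpha,s} \subseteq \mathbb{C}$ be a dense subset of $\mathbb{C}$. Then there exists a transcendental entire function $f:\mathbb{C}\to\mathbb{C}$ such that $f^{(s)}(\alpha) \in E_{\alpha,s}$ for all $\alpha \in A$ and all integers $s \geq 0$.
   Context: A transcendental entire function is an entire function $\mathbb{C}\to\mathbb{C}$ that is not a polynomial. $f^{(s)}$ denotes the $s$-th derivative of $f$, with $f^{(0)}=f$. *)

theory Defs
  imports "HOL-Analysis.Analysis" "HOL-Computational_Algebra.Polynomial"
begin

definition transcendental_entire :: "(complex \<Rightarrow> complex) \<Rightarrow> bool" where
  "transcendental_entire f \<longleftrightarrow> f holomorphic_on UNIV \<and> \<not> (\<exists>p :: complex poly. \<forall>z. f z = poly p z)"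

end

theory Submission
  imports Defs
begin

(* Proof idea: a Hermite-type interpolation series.
   Enumerate the points of A by a sequence beta in which every point occurs
   infinitely often; at its k-th occurrence beta n prescribes the k-th derivative
   (k = prior beta n).  With the basis polynomials Q n = prod_{m<n} (z - beta m),
   the k-th derivative of Q m at beta n vanishes for m > n and is nonzero for m = n,
   so the matrix D m n of these values is triangular.  Hence the coefficients c n
   of  f = sum_n c n * Q n  can be chosen one after another: c n is so small that the
   series converges locally uniformly with all derivatives (f is entire), and the
   n-th prescribed derivative of f, a finite sum ending in c n * D n n, lies in the
   dense set E minus {0}.  Adding the point 0 with no constraint, all derivatives
   of f at 0 are nonzero, so f is not a polynomial. *)

section \<open>Higher derivatives of polynomials\<close>

lemma poly_higher_pderiv_multiple_root:
  fixes p :: "'a::idom poly"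
  assumes "[:-a, 1:] ^ k dvd p" and "s < k"
  shows "poly ((pderiv ^^ s) p) a = 0"
  using assms
proof (induction s arbitrary: p k)
  case 0
  then have "[:-a, 1:] dvd p" by (meson dvd_power dvd_trans)
  then show ?case by (simp add: poly_eq_0_iff_dvd)
next
  case (Suc s)
  then obtain k' where k: "k = Suc k'" by (cases k) auto
  from Suc.prems obtain q where p: "p = [:-a, 1:] ^ k * q" by blast
  have "pderiv p = [:-a, 1:] ^ k' * ([:-a, 1:] * pderiv q + smult (of_nat (Suc k')) q)"
    unfolding p k pderiv_mult pderiv_power_Suc by (simp add: pderiv_pCons algebra_simps)
  then have "[:-a, 1:] ^ k' dvd pderiv p" by simp
  then have "poly ((pderiv ^^ s) (pderiv p)) a = 0" using Suc.IH Suc.prems k by simp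
  then show ?case by (simp add: funpow_Suc_right del: funpow.simps)
qed

lemma poly_higher_pderiv_exact_root:
  fixes r :: "'a::{idom,semiring_char_0} poly"
  shows "poly ((pderiv ^^ s) ([:-a, 1:] ^ s * r)) a = fact s * poly r a"
proof (induction s arbitrary: r)
  case (Suc s)
  have "pderiv ([:-a, 1:] ^ Suc s * r) = [:-a, 1:] ^ s * (smult (of_nat (Suc s)) r + [:-a, 1:] * pderiv r)"
    unfolding pderiv_mult pderiv_power_Suc by (simp add: pderiv_pCons algebra_simps)
  then have "poly ((pderiv ^^ Suc s) ([:-a, 1:] ^ Suc s * r)) a
      = fact s * poly (smult (of_nat (Suc s)) r + [:-a, 1:] * pderiv r) a"
    using Suc.IH by (simp add: funpow_Suc_right del: funpow.simps)
  also have "\<dots> = fact (Suc s) * poly r a" by (simp add: algebra_simps)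
  finally show ?case .
qed simp

lemma higher_deriv_poly: "(deriv ^^ s) (poly p) = poly ((pderiv ^^ s) (p :: complex poly))"
proof (induction s)
  case (Suc s)
  have "deriv (poly q) = poly (pderiv q)" for q :: "complex poly"
    by (rule ext, rule DERIV_imp_deriv, rule poly_DERIV)
  then show ?case using Suc by simp
qed simp

text \<open>A function with no vanishing derivative at some point is not a polynomial,
  since derivatives of order above the degree of a polynomial vanish.\<close>
lemma not_polynomial_if_derivs_nonzero:
  assumes "\<And>s. (deriv ^^ s) f (a :: complex) \<noteq> 0"
  shows "\<not> (\<exists>p :: complex poly. \<forall>z. f z = poly p z)"
proof
  assume "\<exists>p :: complex poly. \<forall>z. f z = poly p z"
  then obtain p :: "complex poly" where f: "f = poly p" by auto
  have degree: "degree ((pderiv ^^ s) p) = degree p - s" for s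
    by (induction s) (auto simp: degree_pderiv)
  have "(pderiv ^^ Suc (degree p)) p = 0"
    using degree[of "degree p"] by (simp add: pderiv_eq_0_iff)
  then have "(deriv ^^ Suc (degree p)) f a = 0"
    unfolding f higher_deriv_poly by (simp del: funpow.simps)
  then show False using assms by blast
qed

definition coeff_bound :: "complex poly \<Rightarrow> real \<Rightarrow> real" where
  "coeff_bound p R = (\<Sum>i\<le>degree p. norm (coeff p i) * R ^ i)"

lemma norm_poly_le_coeff_bound: "norm x \<le> R \<Longrightarrow> norm (poly p x) \<le> coeff_bound p R"
  unfolding coeff_bound_def poly_altdef
  by (rule order_trans[OF norm_sum], rule sum_mono)
     (simp add: norm_mult norm_power mult_left_mono power_mono)

lemma coeff_bound_nonneg: "R \<ge> 0 \<Longrightarrow> coeff_bound p R \<ge> 0"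
  unfolding coeff_bound_def by (intro sum_nonneg) simp

section \<open>Entire functions given by series of polynomials\<close>

lemma poly_series_has_field_derivative:
  fixes c :: "nat \<Rightarrow> complex" and q :: "nat \<Rightarrow> complex poly"
  assumes M: "summable M"
    and bound: "\<And>n s x. s \<le> n \<Longrightarrow> norm x \<le> real n \<Longrightarrow> norm (c n * poly ((pderiv ^^ s) (q n)) x) \<le> M n"
  shows "((\<lambda>x. \<Sum>n. c n * poly ((pderiv ^^ s) (q n)) x) has_field_derivative
           (\<Sum>n. c n * poly ((pderiv ^^ Suc s) (q n)) z)) (at z)"
proof -
  let ?term = "\<lambda>s n x. c n * poly ((pderiv ^^ s) (q n)) x"
  have dominated: "eventually (\<lambda>n. \<forall>x\<in>ball 0 R. norm (?term s n x) \<le> M n) sequentially" for s R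
    using eventually_ge_at_top[of "max s (nat \<lceil>R\<rceil>)"]
  proof (rule eventually_mono, intro ballI)
    fix n x assume n: "max s (nat \<lceil>R\<rceil>) \<le> n" and "x \<in> ball (0::complex) R"
    then have "norm x \<le> real n" using real_nat_ceiling_ge[of R] by (auto simp: dist_norm)
    then show "norm (?term s n x) \<le> M n" using n bound by simp
  qed
  define R where "R = norm z + 1"
  have termwise: "(?term s n has_field_derivative ?term (Suc s) n x) (at x within ball 0 R)" for n x
    using DERIV_cmult[OF poly_DERIV, of "c n"] by (auto intro: has_field_derivative_at_within)
  have uniform: "uniformly_convergent_on (ball 0 R) (\<lambda>n x. \<Sum>i<n. ?term (Suc s) i x)"
    by (rule Weierstrass_m_test'_ev[OF dominated M])
  have at_0: "summable (\<lambda>n. ?term s n 0)"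
    by (rule summable_comparison_test_ev[OF eventually_mono[OF dominated[where s=s and R=1]] M]) simp
  show ?thesis
    by (rule has_field_derivative_series'(2)[OF convex_ball termwise uniform _ at_0])
       (simp_all add: R_def add_nonneg_pos)
qed

lemma entire_poly_series:
  fixes c :: "nat \<Rightarrow> complex" and q :: "nat \<Rightarrow> complex poly"
  assumes "summable M"
    and "\<And>n s x. s \<le> n \<Longrightarrow> norm x \<le> real n \<Longrightarrow> norm (c n * poly ((pderiv ^^ s) (q n)) x) \<le> M n"
  defines "f \<equiv> \<lambda>x. \<Sum>n. c n * poly (q n) x"
  shows "f holomorphic_on UNIV"
    and "(deriv ^^ s) f x = (\<Sum>n. c n * poly ((pderiv ^^ s) (q n)) x)"
proof -
  define F where "F s x = (\<Sum>n. c n * poly ((pderiv ^^ s) (q n)) x)" for s x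
  have F': "(F s has_field_derivative F (Suc s) z) (at z)" for s z
    unfolding F_def by (rule poly_series_has_field_derivative[OF assms(1,2)])
  have "(deriv ^^ s) (F 0) = F s" for s
    by (induction s) (auto intro!: DERIV_imp_deriv F')
  moreover have "f = F 0" by (simp add: f_def F_def fun_eq_iff)
  ultimately show "(deriv ^^ s) f x = (\<Sum>n. c n * poly ((pderiv ^^ s) (q n)) x)"
    by (simp add: F_def)
  show "f holomorphic_on UNIV"
    unfolding \<open>f = F 0\<close> holomorphic_on_def field_differentiable_def
    using F' has_field_derivative_at_within by blast
qed

section \<open>The triangular interpolation basis\<close>

definition occ :: "(nat \<Rightarrow> complex) \<Rightarrow> complex \<Rightarrow> nat \<Rightarrow> nat" where
  "occ \<beta> a k = card {m. m < k \<and> \<beta> m = a}"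

definition prior :: "(nat \<Rightarrow> complex) \<Rightarrow> nat \<Rightarrow> nat" where
  "prior \<beta> n = occ \<beta> (\<beta> n) n"

lemma occ_Suc: "occ \<beta> a (Suc k) = occ \<beta> a k + (if \<beta> k = a then 1 else 0)"
proof -
  have "{m. m < Suc k \<and> \<beta> m = a} = {m. m < k \<and> \<beta> m = a} \<union> (if \<beta> k = a then {k} else {})"
    by (auto simp: less_Suc_eq)
  then show ?thesis unfolding occ_def by (auto simp: card_insert_if)
qed

lemma occ_mono: "j \<le> k \<Longrightarrow> occ \<beta> a j \<le> occ \<beta> a k"
  unfolding occ_def by (intro card_mono) auto

text \<open>If a occurs infinitely often, every derivative order s is prescribed at a:
  the counter occ grows in unit steps, each taken at an occurrence of a.\<close>
lemma prior_surj:
  assumes "infinite {n. \<beta> n = a}"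
  shows "\<exists>n. \<beta> n = a \<and> prior \<beta> n = s"
proof -
  have unbounded: "\<exists>k. occ \<beta> a k \<ge> K" for K
  proof (induction K)
    case (Suc K)
    then obtain k where k: "occ \<beta> a k \<ge> K" by auto
    obtain m where m: "m \<ge> k" "\<beta> m = a"
      using assms unfolding infinite_nat_iff_unbounded_le by auto
    have "occ \<beta> a (Suc m) \<ge> Suc K" using occ_Suc[of \<beta> a m] occ_mono[OF m(1), of \<beta> a] k m(2) by simp
    then show ?case by blast
  qed simp
  define N where "N = (LEAST k. occ \<beta> a k > s)"
  have N: "occ \<beta> a N > s"
    unfolding N_def using unbounded[of "Suc s"] by (auto intro: LeastI_ex simp: Suc_le_eq)
  then obtain j where j: "N = Suc j" by (cases N) (auto simp: occ_def)
  have "\<not> occ \<beta> a j > s" using j not_less_Least[of j "\<lambda>k. occ \<beta> a k > s"] N_def by auto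
  then show ?thesis using N j occ_Suc[of \<beta> a j] by (auto simp: prior_def split: if_splits)
qed

definition basis :: "(nat \<Rightarrow> complex) \<Rightarrow> nat \<Rightarrow> complex poly" where
  "basis \<beta> n = (\<Prod>m<n. [:-\<beta> m, 1:])"

definition basis_val :: "(nat \<Rightarrow> complex) \<Rightarrow> nat \<Rightarrow> nat \<Rightarrow> complex" where
  "basis_val \<beta> m n = poly ((pderiv ^^ prior \<beta> n) (basis \<beta> m)) (\<beta> n)"

lemma basis_split:
  "basis \<beta> n = [:-a, 1:] ^ occ \<beta> a n * (\<Prod>m\<in>{m. m < n \<and> \<beta> m \<noteq> a}. [:-\<beta> m, 1:])"
proof -
  have "basis \<beta> n = (\<Prod>m\<in>{m. m < n \<and> \<beta> m = a} \<union> {m. m < n \<and> \<beta> m \<noteq> a}. [:-\<beta> m, 1:])"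
    unfolding basis_def by (rule prod.cong) auto
  also have "\<dots> = (\<Prod>m\<in>{m. m < n \<and> \<beta> m = a}. [:-\<beta> m, 1:]) * (\<Prod>m\<in>{m. m < n \<and> \<beta> m \<noteq> a}. [:-\<beta> m, 1:])"
    by (rule prod.union_disjoint) auto
  also have "(\<Prod>m\<in>{m. m < n \<and> \<beta> m = a}. [:-\<beta> m, 1:]) = (\<Prod>m\<in>{m. m < n \<and> \<beta> m = a}. [:-a, 1:])"
    by (rule prod.cong) auto
  also have "\<dots> = [:-a, 1:] ^ occ \<beta> a n" unfolding occ_def by simp
  finally show ?thesis .
qed

lemma basis_val_above_diagonal: "n < m \<Longrightarrow> basis_val \<beta> m n = 0"
proof -
  assume "n < m"
  then have "occ \<beta> (\<beta> n) (Suc n) \<le> occ \<beta> (\<beta> n) m" by (intro occ_mono) simp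
  then have "Suc (prior \<beta> n) \<le> occ \<beta> (\<beta> n) m"
    using occ_Suc[of \<beta> "\<beta> n" n] by (simp add: prior_def)
  then have "[:-\<beta> n, 1:] ^ Suc (prior \<beta> n) dvd [:-\<beta> n, 1:] ^ occ \<beta> (\<beta> n) m"
    by (rule le_imp_power_dvd)
  then have "[:-\<beta> n, 1:] ^ Suc (prior \<beta> n) dvd basis \<beta> m"
    unfolding basis_split[of \<beta> m "\<beta> n"] by (rule dvd_mult2)
  then show ?thesis unfolding basis_val_def by (rule poly_higher_pderiv_multiple_root) simp
qed

lemma basis_val_diagonal: "basis_val \<beta> n n \<noteq> 0"
  unfolding basis_val_def prior_def basis_split[of \<beta> n "\<beta> n"] poly_higher_pderiv_exact_root
  by (auto simp: poly_prod)

definition basis_bound :: "(nat \<Rightarrow> complex) \<Rightarrow> nat \<Rightarrow> real" where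
  "basis_bound \<beta> n = (\<Sum>t\<le>n. coeff_bound ((pderiv ^^ t) (basis \<beta> n)) (real n))"

definition eps :: "(nat \<Rightarrow> complex) \<Rightarrow> nat \<Rightarrow> real" where
  "eps \<beta> n = (1/2) ^ n / (1 + basis_bound \<beta> n)"

lemma basis_bound:
  assumes "t \<le> n" "norm x \<le> real n"
  shows "norm (poly ((pderiv ^^ t) (basis \<beta> n)) x) \<le> basis_bound \<beta> n"
  unfolding basis_bound_def
  by (rule order_trans[OF norm_poly_le_coeff_bound[OF assms(2)]], rule member_le_sum)
     (use assms in \<open>auto intro: coeff_bound_nonneg\<close>)

lemma eps_pos: "eps \<beta> n > 0"
  unfolding eps_def basis_bound_def by (simp add: add_pos_nonneg sum_nonneg coeff_bound_nonneg)

lemma eps_times_basis_bound: "eps \<beta> n * basis_bound \<beta> n \<le> (1/2) ^ n"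
proof -
  have "basis_bound \<beta> n \<ge> 0"
    unfolding basis_bound_def by (simp add: sum_nonneg coeff_bound_nonneg)
  then have "(1/2) ^ n * (basis_bound \<beta> n / (1 + basis_bound \<beta> n)) \<le> ((1/2) ^ n :: real)"
    by (intro mult_left_le) auto
  then show ?thesis unfolding eps_def by simp
qed

lemma recursive_choice:
  fixes P :: "nat \<Rightarrow> (nat \<Rightarrow> 'a) \<Rightarrow> 'a \<Rightarrow> bool"
  assumes local: "\<And>n g g' x. (\<And>m. m < n \<Longrightarrow> g m = g' m) \<Longrightarrow> P n g x \<Longrightarrow> P n g' x"
    and exists: "\<And>n g. \<exists>x. P n g x"
  shows "\<exists>c. \<forall>n. P n c (c n)"
proof -
  define pre :: "nat \<Rightarrow> nat \<Rightarrow> 'a"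
    where "pre = rec_nat (\<lambda>_. undefined) (\<lambda>n g. g(n := SOME x. P n g x))"
  have pre_Suc: "pre (Suc n) = (pre n)(n := SOME x. P n (pre n) x)" for n
    by (simp add: pre_def)
  have stable: "m < n \<Longrightarrow> pre n m = pre (Suc m) m" for m n
    by (induction n) (auto simp: pre_Suc less_Suc_eq)
  define c where "c n = pre (Suc n) n" for n
  have "P n (pre n) (c n)" for n
    unfolding c_def pre_Suc using someI_ex[OF exists] by simp
  then have "P n c (c n)" for n
    by (rule local[rotated]) (unfold c_def, erule stable)
  then show ?thesis by blast
qed

lemma dense_pick:
  assumes "closure (E :: complex set) = UNIV" "d \<noteq> 0" "e > 0"
  shows "\<exists>c. norm c \<le> e \<and> v + c * d \<in> E - {0}"
proof -
  define r where "r = e * norm d"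
  have r: "r > 0" using assms by (simp add: r_def)
  define x where "x = (if v = 0 then of_real (r/4) else v)"
  have x: "x \<noteq> 0" "dist x v < r/2" using r by (auto simp: x_def dist_norm)
  have "x \<in> closure E" using assms by simp
  then obtain w where w: "w \<in> E" "dist w x < min (r/2) (norm x)"
    using r x by (metis closure_approachable min_less_iff_conj zero_less_divide_iff zero_less_norm_iff zero_less_numeral)
  have "w \<noteq> 0" using w(2) by (auto simp: dist_norm)
  have "norm (w - v) < r"
    using w(2) x(2) dist_triangle_less_add[of w x "r/2" v "r/2"] by (auto simp: dist_norm norm_minus_commute)
  then have "norm ((w - v) / d) \<le> e" using assms(2) by (simp add: norm_divide r_def divide_le_eq)
  moreover have "v + (w - v) / d * d \<in> E - {0}" using assms(2) \<open>w \<noteq> 0\<close> w(1) by simp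
  ultimately show ?thesis by blast
qed

lemma interpolation_along_nodes:
  fixes \<beta> :: "nat \<Rightarrow> complex" and E :: "complex \<Rightarrow> nat \<Rightarrow> complex set"
  assumes dense: "\<And>n s. closure (E (\<beta> n) s) = UNIV"
  shows "\<exists>f. f holomorphic_on UNIV \<and>
    (\<forall>n. (deriv ^^ prior \<beta> n) f (\<beta> n) \<in> E (\<beta> n) (prior \<beta> n) - {0})"
proof -
  let ?D = "basis_val \<beta>"
  define P where "P n g x \<longleftrightarrow> norm x \<le> eps \<beta> n \<and>
      (\<Sum>m<n. g m * ?D m n) + x * ?D n n \<in> E (\<beta> n) (prior \<beta> n) - {0}" for n g x
  have "\<exists>c. \<forall>n. P n c (c n)"
  proof (rule recursive_choice)
    show "P n g' x" if same: "\<And>m. m < n \<Longrightarrow> g m = g' m" and "P n g x" for n g g' x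
    proof -
      have "(\<Sum>m<n. g m * ?D m n) = (\<Sum>m<n. g' m * ?D m n)" using same by (intro sum.cong) auto
      then show ?thesis using \<open>P n g x\<close> unfolding P_def by simp
    qed
    show "\<exists>x. P n g x" for n g
      unfolding P_def by (rule dense_pick[OF dense basis_val_diagonal eps_pos])
  qed
  then obtain c where c: "\<And>n. P n c (c n)" by blast
  have bound: "norm (c n * poly ((pderiv ^^ s) (basis \<beta> n)) x) \<le> (1/2) ^ n"
    if "s \<le> n" "norm x \<le> real n" for n s x
  proof -
    have "norm (c n * poly ((pderiv ^^ s) (basis \<beta> n)) x) \<le> eps \<beta> n * basis_bound \<beta> n"
      unfolding norm_mult using c[of n] basis_bound[OF that] eps_pos[of \<beta> n]
      by (intro mult_mono) (auto simp: P_def)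
    then show ?thesis using eps_times_basis_bound by (rule order_trans)
  qed
  define f where "f x = (\<Sum>n. c n * poly (basis \<beta> n) x)" for x
  note series = entire_poly_series[OF summable_geometric[of "1/2"] bound, folded f_def]
  have "(deriv ^^ prior \<beta> n) f (\<beta> n) \<in> E (\<beta> n) (prior \<beta> n) - {0}" for n
  proof -
    have "(deriv ^^ prior \<beta> n) f (\<beta> n) = (\<Sum>m. c m * ?D m n)"
      by (simp add: series(2) basis_val_def)
    also have "\<dots> = (\<Sum>m<Suc n. c m * ?D m n)"
      by (rule suminf_finite) (auto simp: basis_val_above_diagonal)
    finally show ?thesis using c[of n] by (simp add: P_def)
  qed
  then show ?thesis using series(1) by auto
qed

lemma enumeration_infinitely_often:
  fixes A :: "'a set"
  assumes "countable A" "A \<noteq> {}"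
  obtains \<beta> :: "nat \<Rightarrow> 'a" where "\<And>n. \<beta> n \<in> A" "\<And>\<alpha>. \<alpha> \<in> A \<Longrightarrow> infinite {n. \<beta> n = \<alpha>}"
proof
  define \<beta> where "\<beta> n = from_nat_into A (fst (prod_decode n))" for n
  show "\<beta> n \<in> A" for n unfolding \<beta>_def using assms(2) by (simp add: from_nat_into)
  show "infinite {n. \<beta> n = \<alpha>}" if \<alpha>: "\<alpha> \<in> A" for \<alpha>
  proof -
    obtain i where i: "from_nat_into A i = \<alpha>" using from_nat_into_surj[OF assms(1) \<alpha>] by auto
    have "range (\<lambda>j. prod_encode (i, j)) \<subseteq> {n. \<beta> n = \<alpha>}" using i by (auto simp: \<beta>_def)
    moreover have "infinite (range (\<lambda>j. prod_encode (i, j)))"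
      by (rule range_inj_infinite) (simp add: inj_def)
    ultimately show ?thesis using infinite_super by blast
  qed
qed

lemma dense_derivative_interpolation:
  fixes A :: "complex set" and E :: "complex \<Rightarrow> nat \<Rightarrow> complex set"
  assumes "countable A" "A \<noteq> {}" "\<And>\<alpha> s. \<alpha> \<in> A \<Longrightarrow> closure (E \<alpha> s) = UNIV"
  shows "\<exists>f. f holomorphic_on UNIV \<and> (\<forall>\<alpha>\<in>A. \<forall>s. (deriv ^^ s) f \<alpha> \<in> E \<alpha> s - {0})"
proof -
  obtain \<beta> :: "nat \<Rightarrow> complex"
    where \<beta>: "\<And>n. \<beta> n \<in> A" "\<And>\<alpha>. \<alpha> \<in> A \<Longrightarrow> infinite {n. \<beta> n = \<alpha>}"
    using enumeration_infinitely_often[OF assms(1,2)] by metis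
  have "closure (E (\<beta> n) s) = UNIV" for n s using assms(3) \<beta>(1) by blast
  from interpolation_along_nodes[where \<beta>=\<beta> and E=E, OF this] obtain f where f: "f holomorphic_on UNIV"
    "\<And>n. (deriv ^^ prior \<beta> n) f (\<beta> n) \<in> E (\<beta> n) (prior \<beta> n) - {0}"
    by blast
  have "(deriv ^^ s) f \<alpha> \<in> E \<alpha> s - {0}" if \<alpha>: "\<alpha> \<in> A" for \<alpha> s
  proof -
    obtain n where "\<beta> n = \<alpha>" "prior \<beta> n = s" using prior_surj[OF \<beta>(2)[OF \<alpha>]] by blast
    then show ?thesis using f(2)[of n] by simp
  qed
  then show ?thesis using f(1) by blast
qed

theorem theorem1:
  fixes A :: "complex set" and E :: "complex \<Rightarrow> nat \<Rightarrow> complex set"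
  assumes "countable A"
    and "\<And>\<alpha> s. \<alpha> \<in> A \<Longrightarrow> closure (E \<alpha> s) = UNIV"
  shows "\<exists>f. transcendental_entire f \<and> (\<forall>\<alpha>\<in>A. \<forall>s. (deriv ^^ s) f \<alpha> \<in> E \<alpha> s)"
proof -
  define E' where "E' \<alpha> s = (if \<alpha> \<in> A then E \<alpha> s else UNIV)" for \<alpha> s
  have "closure (E' \<alpha> s) = UNIV" if "\<alpha> \<in> insert 0 A" for \<alpha> s
    using assms(2) by (simp add: E'_def)
  then obtain f where f: "f holomorphic_on UNIV"
    "\<forall>\<alpha>\<in>insert 0 A. \<forall>s. (deriv ^^ s) f \<alpha> \<in> E' \<alpha> s - {0}"
    using dense_derivative_interpolation[OF countable_insert[OF assms(1)] insert_not_empty] by blast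
  have "(deriv ^^ s) f 0 \<noteq> 0" for s using f(2) by blast
  then have "transcendental_entire f"
    unfolding transcendental_entire_def using f(1) not_polynomial_if_derivs_nonzero by blast
  moreover have "\<forall>\<alpha>\<in>A. \<forall>s. (deriv ^^ s) f \<alpha> \<in> E \<alpha> s" using f(2) by (simp add: E'_def)
  ultimately show ?thesis by blast
qed

end
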